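(* Let $(\vec p(\cdot),q(\cdot),\vec r,s)$ be a proper $m$-admissible quadruple and $\vec w$ an $m$-tuple of weights. If $\vec w\in\mathcal{A}_{(\vec p(\cdot),q(\cdot)),(\vec r,s)}$, then $\vec w\in\mathcal{A}_{(\vec p(\cdot),q(\cdot)),(\vec r,\infty)}$ and $[\vec w]_{\mathcal{A}_{(\vec p(\cdot),q(\cdot)),(\vec r,\infty)}}\le C[\vec w]_{\mathcal{A}_{(\vec p(\cdot),q(\cdot)),(\vec r,s)}}$ with $C$ depending only on $q(\cdot)$ and $s$.
   Context: Exponents on $\mathbb{R}^n$. An $m$-admissible quadruple $(\vec p(\cdot),q(\cdot),\vec r,s)$: $\vec r\in(0,\infty)^m$, $s\in(0,\infty]$, $p_j\in\mathscr{P}_0$ (i.e. $0<(p_j)_-\le(p_j)_+<\infty$) with $r_j<(p_j)_-$, $q\in\mathscr{P}_0$ with $q_+<s$, and $\frac1p:=\sum_j\frac1{p_j}$ satisfies $\frac1p-\frac1q=\gamma$ constant $\ge0$; $\frac1r=\sum\frac1{r_j}$; proper if all $p_j,q$ are globally log-Hölder continuous. With $\nu_{\vec w}=\prod w_j$ and Luxemburg quasinorms, $[\vec w]_{\mathcal{A}_{(\vec p,q),(\vec r,s)}}=\sup_Q|Q|^{\gamma-(\frac1r-\frac1s)}\|\nu_{\vec w}\chi_Q\|_{1/(\frac1q-\frac1s)}\prod_j\|w_j^{-1}\chi_Q\|_{1/(\frac1{r_j}-\frac1{p_j})}$ over cubes ($1/\infty=0$). *)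

theory Defs
  imports "HOL-Analysis.Analysis"
begin

text \<open>Variable exponents live on R^n = real ^ 'n. Essential infimum/supremum
 of an exponent are taken pointwise (inf / sup over all points).\<close>

definition pminus :: "('a \<Rightarrow> real) \<Rightarrow> real" where
  "pminus p = Inf (range p)"

definition pplus :: "('a \<Rightarrow> real) \<Rightarrow> real" where
  "pplus p = Sup (range p)"

definition P0 :: "(real ^ 'n \<Rightarrow> real) \<Rightarrow> bool" where
  "P0 p \<longleftrightarrow> p \<in> borel_measurable lebesgue \<and> bdd_below (range p) \<and> bdd_above (range p)
      \<and> 0 < pminus p"

definition log_holder :: "(real ^ 'n \<Rightarrow> real) \<Rightarrow> bool" where
  "log_holder p \<longleftrightarrow>
     (\<exists>C0. \<forall>x y. 0 < dist x y \<and> dist x y < 1/2 \<longrightarrow> \<bar>p x - p y\<bar> \<le> C0 / (- ln (dist x y)))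
   \<and> (\<exists>Cinf pinf. \<forall>x. \<bar>p x - pinf\<bar> \<le> Cinf / ln (exp 1 + norm x))"

definition einv :: "ereal \<Rightarrow> real" where
  "einv s = (if s = \<infinity> then 0 else 1 / real_of_ereal s)"

definition admissible ::
  "nat \<Rightarrow> (nat \<Rightarrow> real ^ 'n \<Rightarrow> real) \<Rightarrow> (real ^ 'n \<Rightarrow> real) \<Rightarrow> (nat \<Rightarrow> real) \<Rightarrow> ereal \<Rightarrow> bool" where
  "admissible m p q r s \<longleftrightarrow>
     1 \<le> m \<and> 0 < s
   \<and> (\<forall>j<m. 0 < r j \<and> P0 (p j) \<and> r j < pminus (p j))
   \<and> P0 q \<and> ereal (pplus q) < s
   \<and> (\<exists>\<gamma>\<ge>0. \<forall>x. (\<Sum>j<m. 1 / p j x) - 1 / q x = \<gamma>)"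

definition proper_admissible ::
  "nat \<Rightarrow> (nat \<Rightarrow> real ^ 'n \<Rightarrow> real) \<Rightarrow> (real ^ 'n \<Rightarrow> real) \<Rightarrow> (nat \<Rightarrow> real) \<Rightarrow> ereal \<Rightarrow> bool" where
  "proper_admissible m p q r s \<longleftrightarrow>
     admissible m p q r s \<and> (\<forall>j<m. log_holder (p j)) \<and> log_holder q"

text \<open>The constant gamma = 1/p - 1/q (constant by admissibility; evaluated at 0).\<close>
definition gam :: "nat \<Rightarrow> (nat \<Rightarrow> real ^ 'n \<Rightarrow> real) \<Rightarrow> (real ^ 'n \<Rightarrow> real) \<Rightarrow> real" where
  "gam m p q = (\<Sum>j<m. 1 / p j 0) - 1 / q 0"

definition weight :: "(real ^ 'n \<Rightarrow> real) \<Rightarrow> bool" where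
  "weight w \<longleftrightarrow> w \<in> borel_measurable lebesgue \<and> (\<forall>x. 0 \<le> w x)
     \<and> (AE x in lebesgue. 0 < w x)
     \<and> (\<forall>K. compact K \<longrightarrow> set_integrable lebesgue K w)"

definition lux :: "(real ^ 'n \<Rightarrow> real) \<Rightarrow> (real ^ 'n \<Rightarrow> real) \<Rightarrow> ennreal" where
  "lux e f = Inf {ennreal t | t. 0 < t \<and>
       (\<integral>\<^sup>+ x. ennreal ((\<bar>f x\<bar> / t) powr e x) \<partial>lebesgue) \<le> 1}"

definition cubes :: "(real ^ 'n) set set" where
  "cubes = {cbox a (a + l *\<^sub>R One) | a l. 0 < l}"

definition Aconst ::
  "nat \<Rightarrow> (nat \<Rightarrow> real ^ 'n \<Rightarrow> real) \<Rightarrow> (real ^ 'n \<Rightarrow> real) \<Rightarrow> (nat \<Rightarrow> real) \<Rightarrow> ereal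
     \<Rightarrow> (nat \<Rightarrow> real ^ 'n \<Rightarrow> real) \<Rightarrow> ennreal" where
  "Aconst m p q r s w =
     (SUP Q\<in>cubes.
        ennreal (measure lebesgue Q powr (gam m p q - ((\<Sum>j<m. 1 / r j) - einv s)))
      * lux (\<lambda>x. 1 / (1 / q x - einv s)) (\<lambda>x. indicator Q x * (\<Prod>j<m. w j x))
      * (\<Prod>j<m. lux (\<lambda>x. 1 / (1 / r j - 1 / p j x)) (\<lambda>x. indicator Q x * inverse (w j x))))"

end

(* Write q_s for the exponent with 1/q_s = 1/q - 1/s. For f supported in a cube Q,
   a Hoelder inequality for Luxemburg norms gives
     |f|_q <= 2^(1/q_-) |Q|^(1/s) |f|_{q_s},
   and the factor |Q|^(1/s) is exactly the difference between the powers of |Q| in the cube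
   terms of the (r, infinity) and the (r, s) constants. The Hoelder inequality comes from the
   pointwise Young-type bound (a b)^q <= a^{q_s} + b^s with a = |f|/t and b = |Q|^(-1/s):
   integrating it, the modular of f/(2^(1/q_-) |Q|^(1/s) t) is at most half of
   (modular of f/t) + 1. *)

theory Submission
  imports Defs
begin

lemma powr_mult_le_powr_add:
  fixes a b e e1 e2 :: real
  assumes "0 \<le> a" "0 \<le> b" "0 < e1" "0 < e2" and conj: "1/e = 1/e1 + 1/e2"
  shows "(a * b) powr e \<le> a powr e1 + b powr e2"
proof (cases "a = 0 \<or> b = 0")
  case True
  then show ?thesis by auto
next
  case False
  with assms have "0 < a" "0 < b" by auto
  have "0 < e" using conj assms
    by (metis add_pos_pos zero_less_divide_1_iff)
  define \<alpha> where "\<alpha> = e / e1"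
  define \<beta> where "\<beta> = e / e2"
  have "\<alpha> + \<beta> = e * (1/e1 + 1/e2)" by (simp add: \<alpha>_def \<beta>_def field_simps)
  also have "\<dots> = 1" using \<open>0 < e\<close> by (simp flip: conj)
  finally have "\<alpha> + \<beta> = 1" .
  moreover have "0 \<le> \<alpha>" "0 \<le> \<beta>" using \<open>0 < e\<close> assms by (auto simp: \<alpha>_def \<beta>_def)
  ultimately have "\<alpha> \<le> 1" "\<beta> \<le> 1" by linarith+
  have "(a * b) powr e = (a powr e1) powr \<alpha> * (b powr e2) powr \<beta>"
    using assms \<open>0 < a\<close> \<open>0 < b\<close> by (simp add: powr_mult powr_powr \<alpha>_def \<beta>_def)
  also have "\<dots> \<le> \<alpha> * a powr e1 + \<beta> * b powr e2"
    using \<open>0 < a\<close> \<open>0 < b\<close> \<open>0 \<le> \<alpha>\<close> \<open>0 \<le> \<beta>\<close> \<open>\<alpha> + \<beta> = 1\<close>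
    by (intro Youngs_inequality_0) auto
  also have "\<dots> \<le> a powr e1 + b powr e2"
    using \<open>0 \<le> \<alpha>\<close> \<open>0 \<le> \<beta>\<close> \<open>\<alpha> \<le> 1\<close> \<open>\<beta> \<le> 1\<close>
    by (intro add_mono mult_left_le_one_le) auto
  finally show ?thesis .
qed

definition lux_modular :: "(real ^ 'n \<Rightarrow> real) \<Rightarrow> (real ^ 'n \<Rightarrow> real) \<Rightarrow> real \<Rightarrow> ennreal" where
  "lux_modular e f t = (\<integral>\<^sup>+ x. ennreal ((\<bar>f x\<bar> / t) powr e x) \<partial>lebesgue)"

lemma lux_eq_Inf_modular: "lux e f = Inf {ennreal t | t. 0 < t \<and> lux_modular e f t \<le> 1}"
  by (simp add: lux_def lux_modular_def)

lemma lux_le_scaled: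
  assumes "0 < c"
    and scaled: "\<And>t. 0 < t \<Longrightarrow> lux_modular e2 f t \<le> 1 \<Longrightarrow> lux_modular e1 f (c * t) \<le> 1"
  shows "lux e1 f \<le> ennreal c * lux e2 f"
proof -
  have "lux e1 f / ennreal c \<le> lux e2 f"
    unfolding lux_eq_Inf_modular[of e2]
  proof (rule Inf_greatest)
    fix y assume "y \<in> {ennreal t | t. 0 < t \<and> lux_modular e2 f t \<le> 1}"
    then obtain t where y: "y = ennreal t" and "0 < t" and "lux_modular e2 f t \<le> 1"
      by auto
    then have "lux e1 f \<le> ennreal (c * t)"
      using scaled \<open>0 < c\<close> unfolding lux_eq_Inf_modular
      by (intro Inf_lower) auto
    then show "lux e1 f / ennreal c \<le> y"
      using \<open>0 < c\<close> \<open>0 < t\<close> by (intro divide_le_posI_ennreal) (auto simp: y ennreal_mult)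
  qed
  have "lux e1 f = lux e1 f / ennreal c * ennreal c"
    using \<open>0 < c\<close> by (simp add: ennreal_divide_times ennreal_times_divide mult_divide_eq_ennreal)
  also have "\<dots> \<le> lux e2 f * ennreal c"
    using \<open>lux e1 f / ennreal c \<le> lux e2 f\<close> by (rule mult_right_mono) simp
  finally show ?thesis by (simp add: mult.commute)
qed

lemma lux_modular_holder:
  fixes f e1 e2 :: "real ^ 'n \<Rightarrow> real" and qm s t :: real
  assumes Q: "Q \<in> lmeasurable" "0 < measure lebesgue Q"
    and supp: "\<And>x. x \<notin> Q \<Longrightarrow> f x = 0"
    and [measurable]: "f \<in> borel_measurable lebesgue" "e2 \<in> borel_measurable lebesgue"
    and "0 < qm" and e1_ge: "\<And>x. qm \<le> e1 x" and "0 < s" and e2_pos: "\<And>x. 0 < e2 x"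
    and conj: "\<And>x. 1 / e1 x = 1 / e2 x + 1 / s" and "0 < t"
  shows "lux_modular e1 f (2 powr (1/qm) * measure lebesgue Q powr (1/s) * t)
    \<le> (lux_modular e2 f t + 1) / 2"
proof -
  define K where "K = 2 powr (1/qm)"
  define \<mu> where "\<mu> = measure lebesgue Q powr (1/s)"
  have "1 \<le> K" using \<open>0 < qm\<close> unfolding K_def by (intro ge_one_powr_ge_zero) auto
  have "0 < \<mu>" using Q by (simp add: \<mu>_def)
  have K_powr: "(1/K) powr qm = 1/2"
    using \<open>0 < qm\<close> by (simp add: K_def powr_divide powr_powr)
  have \<mu>_powr: "(1/\<mu>) powr s = 1 / measure lebesgue Q"
    using \<open>0 < s\<close> Q by (simp add: \<mu>_def powr_divide powr_powr)
  have pointwise: "(\<bar>f x\<bar> / (K * \<mu> * t)) powr e1 x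
      \<le> ((\<bar>f x\<bar> / t) powr e2 x + indicator Q x / measure lebesgue Q) / 2" for x
  proof (cases "x \<in> Q")
    case False
    then show ?thesis using supp[of x] by simp
  next
    case True
    have "(\<bar>f x\<bar> / (K * \<mu> * t)) powr e1 x = ((\<bar>f x\<bar> / t) * (1/\<mu>)) powr e1 x * (1/K) powr e1 x"
      using \<open>0 < t\<close> \<open>0 < \<mu>\<close> \<open>1 \<le> K\<close> by (simp add: powr_mult[symmetric] mult_ac)
    also have "(1/K) powr e1 x \<le> (1/K) powr qm"
      using \<open>1 \<le> K\<close> e1_ge[of x] \<open>0 < qm\<close> by (intro powr_mono') auto
    then have "((\<bar>f x\<bar> / t) * (1/\<mu>)) powr e1 x * (1/K) powr e1 x
        \<le> ((\<bar>f x\<bar> / t) * (1/\<mu>)) powr e1 x * (1/2)"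
      using K_powr by (intro mult_left_mono) auto
    also have "((\<bar>f x\<bar> / t) * (1/\<mu>)) powr e1 x \<le> (\<bar>f x\<bar> / t) powr e2 x + (1/\<mu>) powr s"
      using \<open>0 < t\<close> \<open>0 < \<mu>\<close> e2_pos[of x] \<open>0 < s\<close> conj[of x]
      by (intro powr_mult_le_powr_add) auto
    finally show ?thesis using True \<mu>_powr by simp
  qed
  have "lux_modular e1 f (K * \<mu> * t)
      \<le> (\<integral>\<^sup>+ x. (ennreal ((\<bar>f x\<bar> / t) powr e2 x)
            + ennreal (1 / measure lebesgue Q) * indicator Q x) / 2 \<partial>lebesgue)"
    unfolding lux_modular_def
  proof (intro nn_integral_mono)
    fix x
    have "ennreal ((\<bar>f x\<bar> / (K * \<mu> * t)) powr e1 x)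
        \<le> ennreal (((\<bar>f x\<bar> / t) powr e2 x + indicator Q x / measure lebesgue Q) / 2)"
      using pointwise by (rule ennreal_leI)
    also have "\<dots> = (ennreal ((\<bar>f x\<bar> / t) powr e2 x)
        + ennreal (1 / measure lebesgue Q) * indicator Q x) / 2"
      using Q by (cases "x \<in> Q") (simp_all flip: ennreal_divide_numeral)
    finally show "ennreal ((\<bar>f x\<bar> / (K * \<mu> * t)) powr e1 x) \<le> \<dots>" .
  qed
  also have "\<dots> = (lux_modular e2 f t + 1) / 2"
    using Q by (simp add: lux_modular_def nn_integral_divide nn_integral_add
        nn_integral_cmult_indicator emeasure_eq_measure2 ennreal_mult'[symmetric])
  finally show ?thesis by (simp add: K_def \<mu>_def)
qed

lemma lux_holder:
  fixes f e1 e2 :: "real ^ 'n \<Rightarrow> real" and qm s :: real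
  assumes Q: "Q \<in> lmeasurable" "0 < measure lebesgue Q"
    and "\<And>x. x \<notin> Q \<Longrightarrow> f x = 0"
    and "f \<in> borel_measurable lebesgue" "e2 \<in> borel_measurable lebesgue"
    and "0 < qm" "\<And>x. qm \<le> e1 x" "0 < s" "\<And>x. 0 < e2 x"
    and "\<And>x. 1 / e1 x = 1 / e2 x + 1 / s"
  shows "lux e1 f \<le> ennreal (2 powr (1/qm) * measure lebesgue Q powr (1/s)) * lux e2 f"
proof (rule lux_le_scaled)
  show "0 < 2 powr (1/qm) * measure lebesgue Q powr (1/s)" using Q by simp
  fix t :: real assume "0 < t" "lux_modular e2 f t \<le> 1"
  have "lux_modular e1 f (2 powr (1/qm) * measure lebesgue Q powr (1/s) * t)
      \<le> (lux_modular e2 f t + 1) / 2"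
    using assms \<open>0 < t\<close> by (intro lux_modular_holder) auto
  also have "\<dots> \<le> (1 + 1) / 2"
    using \<open>lux_modular e2 f t \<le> 1\<close> by (intro divide_right_mono_ennreal add_right_mono)
  finally show "lux_modular e1 f (2 powr (1/qm) * measure lebesgue Q powr (1/s) * t) \<le> 1"
    by simp
qed

lemma measure_cube_pos:
  assumes "Q \<in> cubes"
  shows "Q \<in> lmeasurable" "0 < measure lebesgue Q"
proof -
  obtain a l where Q: "Q = cbox a (a + l *\<^sub>R One)" and "0 < l"
    using assms by (auto simp: cubes_def)
  show "Q \<in> lmeasurable" by (simp add: Q)
  have "\<forall>i\<in>Basis. a \<bullet> i < (a + l *\<^sub>R One) \<bullet> i"
    using \<open>0 < l\<close> by (simp add: inner_left_distrib)
  then show "0 < measure lebesgue Q"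
    unfolding Q by (simp add: content_pos_lt)
qed

lemma lux_le_shifted_exponent_cube:
  fixes q f :: "real ^ 'n \<Rightarrow> real" and s :: ereal
  assumes "P0 q" "ereal (pplus q) < s" "Q \<in> cubes"
    and "f \<in> borel_measurable lebesgue" "\<And>x. x \<notin> Q \<Longrightarrow> f x = 0"
  shows "lux (\<lambda>x. 1 / (1 / q x - einv \<infinity>)) f
    \<le> ennreal (2 powr (1 / pminus q) * measure lebesgue Q powr einv s)
      * lux (\<lambda>x. 1 / (1 / q x - einv s)) f"
proof -
  have "0 < pminus q" using \<open>P0 q\<close> by (simp add: P0_def)
  have q_bounds: "pminus q \<le> q x" "q x \<le> pplus q" for x
    using \<open>P0 q\<close> unfolding P0_def pminus_def pplus_def by (auto intro: cInf_lower cSup_upper)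
  have q_meas: "q \<in> borel_measurable lebesgue" using \<open>P0 q\<close> by (simp add: P0_def)
  show ?thesis
  proof (cases s)
    case (real sr)
    have q_pos: "0 < q x" and q_less: "q x < sr" for x
      using \<open>0 < pminus q\<close> q_bounds[of x] \<open>ereal (pplus q) < s\<close> real by auto
    have "0 < sr" using q_pos q_less by (meson order.strict_trans)
    have "1 / sr < 1 / q x" for x using q_pos q_less by (simp add: frac_less2)
    then have "lux (\<lambda>x. 1 / (1 / q x)) f
        \<le> ennreal (2 powr (1 / pminus q) * measure lebesgue Q powr (1 / sr))
          * lux (\<lambda>x. 1 / (1 / q x - 1 / sr)) f"
      using assms \<open>0 < sr\<close> \<open>0 < pminus q\<close> q_bounds q_meas measure_cube_pos[OF \<open>Q \<in> cubes\<close>]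
      by (intro lux_holder) auto
    then show ?thesis by (simp add: einv_def real)
  next
    case PInf
    have "1 \<le> ennreal (2 powr (1 / pminus q))" using \<open>0 < pminus q\<close> by (simp add: ge_one_powr_ge_zero)
    then have "lux (\<lambda>x. 1 / (1 / q x)) f \<le> ennreal (2 powr (1 / pminus q)) * lux (\<lambda>x. 1 / (1 / q x)) f"
      using mult_right_mono[of 1] by fastforce
    \<comment> \<open>\<open>0 powr 0 = 0\<close>, so \<open>|Q|\<^sup>0 = 1\<close> needs \<open>|Q| > 0\<close>\<close>
    then show ?thesis
      using PInf measure_cube_pos[OF \<open>Q \<in> cubes\<close>] by (simp add: einv_def)
  next
    case MInf
    then show ?thesis using \<open>ereal (pplus q) < s\<close> by simp
  qed
qed

definition Acube ::
  "nat \<Rightarrow> (nat \<Rightarrow> real ^ 'n \<Rightarrow> real) \<Rightarrow> (real ^ 'n \<Rightarrow> real) \<Rightarrow> (nat \<Rightarrow> real) \<Rightarrow> ereal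
     \<Rightarrow> (nat \<Rightarrow> real ^ 'n \<Rightarrow> real) \<Rightarrow> (real ^ 'n) set \<Rightarrow> ennreal" where
  "Acube m p q r s w Q =
     ennreal (measure lebesgue Q powr (gam m p q - ((\<Sum>j<m. 1 / r j) - einv s)))
   * lux (\<lambda>x. 1 / (1 / q x - einv s)) (\<lambda>x. indicator Q x * (\<Prod>j<m. w j x))
   * (\<Prod>j<m. lux (\<lambda>x. 1 / (1 / r j - 1 / p j x)) (\<lambda>x. indicator Q x * inverse (w j x)))"

lemma Aconst_eq_SUP_Acube: "Aconst m p q r s w = (SUP Q\<in>cubes. Acube m p q r s w Q)"
  by (simp add: Aconst_def Acube_def)

lemma Acube_infinity_le:
  fixes q :: "real ^ 'n \<Rightarrow> real" and s :: ereal
  assumes "P0 q" "ereal (pplus q) < s" "Q \<in> cubes"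
    and w_meas: "\<forall>j<m. w j \<in> borel_measurable lebesgue"
  shows "Acube m p q r \<infinity> w Q \<le> ennreal (2 powr (1 / pminus q)) * Acube m p q r s w Q"
proof -
  define f where "f = (\<lambda>x. indicator Q x * (\<Prod>j<m. w j x))"
  define P where "P = (\<Prod>j<m. lux (\<lambda>x. 1 / (1 / r j - 1 / p j x)) (\<lambda>x. indicator Q x * inverse (w j x)))"
  define g where "g = gam m p q - (\<Sum>j<m. 1 / r j)"
  have "Q \<in> sets lebesgue" using measure_cube_pos(1)[OF \<open>Q \<in> cubes\<close>] by auto
  then have "f \<in> borel_measurable lebesgue"
    unfolding f_def using w_meas
    by (intro borel_measurable_times borel_measurable_indicator borel_measurable_prod) auto
  then have "lux (\<lambda>x. 1 / (1 / q x - einv \<infinity>)) f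
      \<le> ennreal (2 powr (1 / pminus q) * measure lebesgue Q powr einv s)
        * lux (\<lambda>x. 1 / (1 / q x - einv s)) f"
    using assms by (intro lux_le_shifted_exponent_cube) (auto simp: f_def)
  then have "Acube m p q r \<infinity> w Q
      \<le> ennreal (measure lebesgue Q powr g)
        * (ennreal (2 powr (1 / pminus q) * measure lebesgue Q powr einv s)
          * lux (\<lambda>x. 1 / (1 / q x - einv s)) f) * P"
    unfolding Acube_def by (simp add: f_def P_def g_def einv_def mult_right_mono mult_left_mono)
  also have "\<dots> = ennreal (2 powr (1 / pminus q))
      * (ennreal (measure lebesgue Q powr (g + einv s)) * lux (\<lambda>x. 1 / (1 / q x - einv s)) f * P)"
    by (simp add: powr_add ennreal_mult mult_ac)
  also have "\<dots> = ennreal (2 powr (1 / pminus q)) * Acube m p q r s w Q"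
    by (simp add: Acube_def f_def P_def g_def algebra_simps)
  finally show ?thesis .
qed

lemma Aconst_infinity_le:
  fixes q :: "real ^ 'n \<Rightarrow> real" and s :: ereal
  assumes "P0 q" "ereal (pplus q) < s" "\<forall>j<m. w j \<in> borel_measurable lebesgue"
  shows "Aconst m p q r \<infinity> w \<le> ennreal (2 powr (1 / pminus q)) * Aconst m p q r s w"
  unfolding Aconst_eq_SUP_Acube SUP_mult_left_ennreal
  using assms by (intro SUP_subset_mono) (auto intro: Acube_infinity_le)

theorem mainTheorem9:
  fixes q :: "real ^ 'n \<Rightarrow> real" and s :: ereal
  shows "\<exists>C>0. \<forall>(m::nat) (p::nat \<Rightarrow> real ^ 'n \<Rightarrow> real) (r::nat \<Rightarrow> real) (w::nat \<Rightarrow> real ^ 'n \<Rightarrow> real).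
           proper_admissible m p q r s \<and> (\<forall>j<m. weight (w j)) \<and> Aconst m p q r s w < \<infinity>
           \<longrightarrow> Aconst m p q r \<infinity> w < \<infinity> \<and> Aconst m p q r \<infinity> w \<le> ennreal C * Aconst m p q r s w"
proof (intro exI[of _ "2 powr (1 / pminus q)"] conjI allI impI)
  show "0 < 2 powr (1 / pminus q)" by simp
  fix m p r w
  assume hyps: "proper_admissible m p q r s \<and> (\<forall>j<m. weight (w j)) \<and> Aconst m p q r s w < \<infinity>"
  then have "P0 q" "ereal (pplus q) < s" "\<forall>j<m. w j \<in> borel_measurable lebesgue"
    by (auto simp: proper_admissible_def admissible_def weight_def)
  then show "Aconst m p q r \<infinity> w \<le> ennreal (2 powr (1 / pminus q)) * Aconst m p q r s w"
    by (rule Aconst_infinity_le)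
  also have "\<dots> < \<infinity>" using hyps by (simp add: ennreal_mult_less_top)
  finally show "Aconst m p q r \<infinity> w < \<infinity>" .
qed

end
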